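(* Let $\mathbb F\in\{\mathbb C,\mathbb R\}$, $n>1$, and $\gamma\in\mathbb F^n$ with $\operatorname{diag}(\gamma_1,\dots,\gamma_n)$ not proportional to the identity. Then the functions $|X^{\varkappa,n}_{1,k}|$, $k=1,\dots,[n/2]$, where $\varkappa=n-k+1$, are functionally independent (global) relative invariants of the coadjoint action ${\rm Ad}^*_{{\rm T}_\gamma(n)}$ on $\mathfrak t_\gamma^*(n)$.
   Context: $\mathfrak t_\gamma(n)$ is the Lie algebra over $\mathbb F$ with basis $e_{ij}$ ($1\leqslant i<j\leqslant n$), $f$, brackets $[e_{ij},e_{i'j'}]=\delta_{i'j}e_{ij'}-\delta_{ij'}e_{i'j}$, $[f,e_{ij}]=(\gamma_i-\gamma_j)e_{ij}$; it is the Lie algebra of ${\rm T}_\gamma(n)=\{B\text{ nonsingular upper triangular}\mid\exists\varepsilon:\ b_{ii}=e^{\gamma_i\varepsilon}\}$ with $e_{ij}\sim E^n_{ij}$, $f\sim\operatorname{diag}(\gamma)$ and coadjoint action $({\rm Ad}^*_B\xi)(y)=\xi(B^{-1}yB)$. $x_{ji}$ ($i<j$) is the coordinate on $\mathfrak t_\gamma^*(n)$ dual to $e_{ij}$; $X$ is the strictly lower triangular matrix with entries $x_{ij}$ ($i>j$); $X^{i_1,i_2}_{j_1,j_2}$ is the submatrix with rows $i_1..i_2$ and columns $j_1..j_2$, $|\cdot|$ the determinant. A function $F$ on a $G$-space $M$ is a (global) relative invariant if $F(g\cdot x)=\mu(g,x)F(x)$ for all $g\in G$, $x\in M$, for some multiplier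 $\mu\colon G\times M\to\mathbb F$. *)

theory Defs
  imports "HOL-Analysis.Analysis" "Jordan_Normal_Form.Determinant"
begin

(* Indices are 0-based: the paper's index i in 1..n corresponds to i-1 here.
   gamma :: nat => 'a gives gamma_1..gamma_n as gamma 0 .. gamma (n-1). *)

definition diag_gamma :: "nat \<Rightarrow> (nat \<Rightarrow> 'a::field) \<Rightarrow> 'a mat" where
  "diag_gamma n \<gamma> = mat n n (\<lambda>(i,j). if i = j then \<gamma> i else 0)"

definition mat_inv :: "'a::field mat \<Rightarrow> 'a mat" where
  "mat_inv B = (THE C. inverts_mat B C \<and> inverts_mat C B)"

definition T_gamma :: "nat \<Rightarrow> (nat \<Rightarrow> 'a::{real_normed_field,banach}) \<Rightarrow> 'a mat set" where
  "T_gamma n \<gamma> = {B. B \<in> carrier_mat n n \<and> upper_triangular B \<and> det B \<noteq> 0 \<and>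
       (\<exists>\<epsilon>. \<forall>i<n. B $$ (i,i) = exp (\<gamma> i * \<epsilon>))}"

definition strict_upper :: "nat \<Rightarrow> 'a::zero mat set" where
  "strict_upper n = {N. N \<in> carrier_mat n n \<and> (\<forall>i<n. \<forall>j<n. j \<le> i \<longrightarrow> N $$ (i,j) = 0)}"

(* An element of t_gamma(n) is written a f + sum_{i<j} N_ij e_ij and represented by (a, N),
   N strictly upper triangular; as a matrix it is a diag(gamma) + N. *)
definition lie_elem_mat :: "nat \<Rightarrow> (nat \<Rightarrow> 'a::field) \<Rightarrow> 'a \<times> 'a mat \<Rightarrow> 'a mat" where
  "lie_elem_mat n \<gamma> y = fst y \<cdot>\<^sub>m diag_gamma n \<gamma> + snd y"

(* The dual space t_gamma^*(n): an element xi is given by its coordinates (X, z):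
   X strictly lower triangular with X $$ (j,i) = x_{ji} = xi(e_ij) (i<j), and z = xi(f). *)
definition dual_space :: "nat \<Rightarrow> ('a::zero mat \<times> 'a) set" where
  "dual_space n = {(X,z). X \<in> carrier_mat n n \<and> (\<forall>i<n. \<forall>j<n. i \<le> j \<longrightarrow> X $$ (i,j) = 0)}"

definition pairing :: "nat \<Rightarrow> 'a::comm_ring_1 mat \<times> 'a \<Rightarrow> 'a \<times> 'a mat \<Rightarrow> 'a" where
  "pairing n xi y = fst y * snd xi +
     (\<Sum>j<n. \<Sum>i<j. fst xi $$ (j,i) * snd y $$ (i,j))"

(* the element B^{-1} y B of t_gamma(n) (conjugation preserves the diagonal, so the f-coefficient
   is unchanged and the remainder is strictly upper triangular) *)
definition conj_elem :: "nat \<Rightarrow> (nat \<Rightarrow> 'a::field) \<Rightarrow> 'a mat \<Rightarrow> 'a \<times> 'a mat \<Rightarrow> 'a \<times> 'a mat" where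
  "conj_elem n \<gamma> B y =
     (fst y, mat_inv B * lie_elem_mat n \<gamma> y * B - fst y \<cdot>\<^sub>m diag_gamma n \<gamma>)"

definition unit_mat :: "nat \<Rightarrow> nat \<Rightarrow> nat \<Rightarrow> 'a::zero_neq_one mat" where
  "unit_mat n i j = mat n n (\<lambda>(p,q). if p = i \<and> q = j then 1 else 0)"

(* coadjoint action (Ad*_B xi)(y) = xi(B^{-1} y B), expressed in coordinates:
   x'_{ji} = (Ad*_B xi)(e_ij), z' = (Ad*_B xi)(f) *)
definition coadj :: "nat \<Rightarrow> (nat \<Rightarrow> 'a::field) \<Rightarrow> 'a mat \<Rightarrow> 'a mat \<times> 'a \<Rightarrow> 'a mat \<times> 'a" where
  "coadj n \<gamma> B xi =
     (mat n n (\<lambda>(j,i). if i < j then pairing n xi (conj_elem n \<gamma> B (0, unit_mat n i j)) else 0),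
      pairing n xi (conj_elem n \<gamma> B (1, 0\<^sub>m n n)))"

(* |X^{kappa,n}_{1,k}| with kappa = n-k+1: rows kappa..n, columns 1..k (1-based) *)
definition corner_minor :: "nat \<Rightarrow> nat \<Rightarrow> 'a::comm_ring_1 mat \<times> 'a \<Rightarrow> 'a" where
  "corner_minor n k xi = det (mat k k (\<lambda>(p,q). fst xi $$ (n - k + p, q)))"

definition rel_invariant :: "'g set \<Rightarrow> ('g \<Rightarrow> 'm \<Rightarrow> 'm) \<Rightarrow> 'm set \<Rightarrow> ('m \<Rightarrow> 'a::times) \<Rightarrow> bool" where
  "rel_invariant G act M F \<longleftrightarrow> (\<exists>\<mu>. \<forall>g\<in>G. \<forall>x\<in>M. F (act g x) = \<mu> g x * F x)"

(* coordinates on t_gamma^*(n): None = coordinate dual to f, Some (j,i) = x_{ji} (i<j<n) *)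
definition coords :: "nat \<Rightarrow> (nat \<times> nat) option set" where
  "coords n = insert None (Some ` {(j,i). i < j \<and> j < n})"

definition shift_coord :: "nat \<Rightarrow> (nat \<times> nat) option \<Rightarrow> 'a::comm_ring_1 \<Rightarrow> 'a mat \<times> 'a \<Rightarrow> 'a mat \<times> 'a" where
  "shift_coord n c t xi = (case c of
      None \<Rightarrow> (fst xi, snd xi + t)
    | Some (j,i) \<Rightarrow> (fst xi + t \<cdot>\<^sub>m unit_mat n j i, snd xi))"

(* functional independence of the functions F k (k in K) on t_gamma^*(n):
   at some point their differentials (gradients w.r.t. the coordinates) exist and are
   linearly independent, i.e. the Jacobian has maximal rank |K| *)
definition funct_indep :: "nat \<Rightarrow> ('k \<Rightarrow> 'a mat \<times> 'a \<Rightarrow> 'a::{real_normed_field,banach}) \<Rightarrow> 'k set \<Rightarrow> bool" where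
  "funct_indep n F K \<longleftrightarrow>
     (\<exists>xi\<in>dual_space n. \<exists>D.
        (\<forall>k\<in>K. \<forall>c\<in>coords n. ((\<lambda>t. F k (shift_coord n c t xi)) has_field_derivative D k c) (at 0)) \<and>
        (\<forall>a. (\<forall>c\<in>coords n. (\<Sum>k\<in>K. a k * D k c) = 0) \<longrightarrow> (\<forall>k\<in>K. a k = 0)))"

end

theory Submission
  imports Defs
begin

text \<open>
  The coadjoint action sends the coordinate matrix \<open>X\<close> to the strictly lower part of
  \<open>B X B\<^sup>-\<^sup>1\<close>. For \<open>k \<le> n/2\<close> the lower left \<open>k \<times> k\<close> corner lies strictly below the
  diagonal, and as \<open>B\<close> is upper triangular,
  \<open>corner (B X B\<^sup>-\<^sup>1) \<cdot> B\<^sub>1\<^sub>1 = B\<^sub>2\<^sub>2 \<cdot> corner X\<close>, where \<open>B\<^sub>1\<^sub>1\<close> and \<open>B\<^sub>2\<^sub>2\<close> are the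
  upper left and lower right \<open>k \<times> k\<close> diagonal blocks of \<open>B\<close>. Taking determinants, the
  \<open>k\<close>-th corner minor is multiplied by \<open>det B\<^sub>2\<^sub>2 / det B\<^sub>1\<^sub>1\<close>.

  Each minor is affine in every coordinate, with a cofactor as slope. At the point whose
  coordinate matrix is the strictly lower part of the anti-diagonal, the \<open>k\<close>-th corner is the
  exchange matrix, and the coordinate \<open>x\<^sub>n\<^sub>-\<^sub>k\<^sub>+\<^sub>1\<^sub>,\<^sub>k\<close> lies in the \<open>k\<close>-th corner, with
  nonzero cofactor, but in no smaller one. So the Jacobian is triangular with nonzero diagonal.
\<close>

lemma det_add_scaled_unit_mat:
  fixes M :: "'a::comm_ring_1 mat"
  assumes M: "M \<in> carrier_mat k k" and a: "a < k" and b: "b < k"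
  shows "det (M + t \<cdot>\<^sub>m unit_mat k a b) = det M + t * cofactor M a b"
proof -
  let ?N = "M + t \<cdot>\<^sub>m unit_mat k a b"
  have N: "?N \<in> carrier_mat k k" using M by (simp add: unit_mat_def)
  have "mat_delete ?N a q = mat_delete M a q" for q
    using M by (intro eq_matI) (auto simp: mat_delete_def unit_mat_def)
  hence cof: "cofactor ?N a q = cofactor M a q" for q by (simp add: cofactor_def)
  have "det ?N = (\<Sum>q<k. (M $$ (a,q) + (if q = b then t else 0)) * cofactor M a q)"
    unfolding laplace_expansion_row[OF N a] cof using M a by (intro sum.cong) (auto simp: unit_mat_def)
  also have "\<dots> = (\<Sum>q<k. M $$ (a,q) * cofactor M a q) + (\<Sum>q<k. if q = b then t * cofactor M a q else 0)"
    by (simp add: distrib_right sum.distrib if_distrib[of "\<lambda>x. x * _"] cong: if_cong)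
  also have "\<dots> = (\<Sum>q<k. M $$ (a,q) * cofactor M a q) + t * cofactor M a b"
    using b by simp
  finally show ?thesis using laplace_expansion_row[OF M a] by simp
qed

lemma det_eq_cofactor_if_unit_row:
  fixes M :: "'a::comm_ring_1 mat"
  assumes M: "M \<in> carrier_mat k k" and a: "a < k" and b: "b < k"
    and row: "\<And>q. q < k \<Longrightarrow> M $$ (a,q) = (if q = b then 1 else 0)"
  shows "det M = cofactor M a b"
proof -
  have "det M = (\<Sum>q<k. if q = b then cofactor M a q else 0)"
    unfolding laplace_expansion_row[OF M a] by (rule sum.cong) (auto simp: row)
  thus ?thesis using b by simp
qed

definition exchange_mat :: "nat \<Rightarrow> 'a::zero_neq_one mat" where
  "exchange_mat k = mat k k (\<lambda>(p,q). if p + q = k - 1 then 1 else 0)"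

lemma exchange_mat_carrier [simp]: "exchange_mat k \<in> carrier_mat k k"
  by (simp add: exchange_mat_def)

lemma exchange_mat_squared: "exchange_mat k * exchange_mat k = (1\<^sub>m k :: 'a::semiring_1 mat)"
proof (rule eq_matI)
  fix p r assume "p < dim_row (1\<^sub>m k :: 'a mat)" "r < dim_col (1\<^sub>m k :: 'a mat)"
  hence p: "p < k" and r: "r < k" by auto
  have "(exchange_mat k * exchange_mat k :: 'a mat) $$ (p, r) =
     (\<Sum>q\<in>{0..<k}. (if p + q = k - 1 then 1 else 0) * (if q + r = k - 1 then 1 else 0))"
    using p r by (simp add: exchange_mat_def scalar_prod_def)
  also have "\<dots> = (\<Sum>q\<in>{0..<k}. if q = k - 1 - p then (if q + r = k - 1 then 1 else 0) else 0)"
    using p by (intro sum.cong) auto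
  also have "\<dots> = (1\<^sub>m k :: 'a mat) $$ (p, r)" using p r by auto
  finally show "(exchange_mat k * exchange_mat k :: 'a mat) $$ (p, r) = (1\<^sub>m k :: 'a mat) $$ (p, r)" .
qed (auto simp: exchange_mat_def)

lemma det_exchange_mat_nonzero: "det (exchange_mat k :: 'a::comm_ring_1 mat) \<noteq> 0"
proof -
  have "det (exchange_mat k :: 'a mat) * det (exchange_mat k) = 1"
    using det_mult[of "exchange_mat k :: 'a mat" k "exchange_mat k"] by (simp add: exchange_mat_squared)
  thus ?thesis by auto
qed

lemma mult_unit_mat_mult_index:
  fixes A B :: "'a::semiring_1 mat"
  assumes A: "A \<in> carrier_mat m n" and B: "B \<in> carrier_mat n l"
    and "i < n" "j < n" "r < m" "s < l"
  shows "(A * unit_mat n i j * B) $$ (r,s) = A $$ (r,i) * B $$ (j,s)"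
proof -
  have AE: "(A * unit_mat n i j) $$ (r,b) = (if b = j then A $$ (r,i) else 0)" if "b < n" for b
  proof -
    have "(A * unit_mat n i j) $$ (r,b) = (\<Sum>a\<in>{0..<n}. A $$ (r,a) * unit_mat n i j $$ (a,b))"
      using A assms that by (simp add: unit_mat_def scalar_prod_def)
    also have "\<dots> = (\<Sum>a\<in>{0..<n}. if a = i then (if b = j then A $$ (r,a) else 0) else 0)"
      using that by (intro sum.cong) (auto simp: unit_mat_def)
    finally show ?thesis using assms by simp
  qed
  have "(A * unit_mat n i j * B) $$ (r,s) = (\<Sum>b\<in>{0..<n}. (A * unit_mat n i j) $$ (r,b) * B $$ (b,s))"
    using A B assms by (simp add: scalar_prod_def unit_mat_def)
  also have "\<dots> = (\<Sum>b\<in>{0..<n}. if b = j then A $$ (r,i) * B $$ (b,s) else 0)"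
    by (intro sum.cong) (auto simp: AE)
  also have "\<dots> = A $$ (r,i) * B $$ (j,s)"
    using assms by simp
  finally show ?thesis .
qed

lemma mat_inv_left_right:
  fixes B :: "'a::field mat"
  assumes B: "B \<in> carrier_mat n n" and d: "det B \<noteq> 0"
  shows "mat_inv B \<in> carrier_mat n n" "B * mat_inv B = 1\<^sub>m n" "mat_inv B * B = 1\<^sub>m n"
proof -
  obtain C where C: "C \<in> carrier_mat n n" and BC: "B * C = 1\<^sub>m n" and CB: "C * B = 1\<^sub>m n"
    using det_non_zero_imp_unit[OF B d] unfolding Units_def ring_mat_def by auto
  have "C' = C" if "inverts_mat B C'" "inverts_mat C' B" for C'
  proof -
    from that have BC': "B * C' = 1\<^sub>m n" and C'B: "C' * B = 1\<^sub>m (dim_row C')"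
      using B unfolding inverts_mat_def by auto
    have C': "C' \<in> carrier_mat n n"
      using arg_cong[OF BC', of dim_col] arg_cong[OF C'B, of dim_col] B by auto
    have "C' = (C' * B) * C" using C' B C BC by (simp flip: assoc_mult_mat[OF C' B C])
    also have "\<dots> = C" using C'B C' C by simp
    finally show ?thesis .
  qed
  moreover have "inverts_mat B C \<and> inverts_mat C B" using BC CB B C unfolding inverts_mat_def by auto
  ultimately have "mat_inv B = C" unfolding mat_inv_def by (intro the_equality) auto
  thus "mat_inv B \<in> carrier_mat n n" "B * mat_inv B = 1\<^sub>m n" "mat_inv B * B = 1\<^sub>m n"
    using C BC CB by simp_all
qed

lemma conj_elem_unit_mat:
  fixes B :: "'a::field mat"
  assumes "B \<in> carrier_mat n n" and "det B \<noteq> 0"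
  shows "conj_elem n \<gamma> B (0, unit_mat n i j) = (0, mat_inv B * unit_mat n i j * B)"
proof -
  let ?M = "mat_inv B * unit_mat n i j * B"
  have M: "?M \<in> carrier_mat n n"
    using mat_inv_left_right(1)[OF assms] assms(1) by (auto simp: unit_mat_def)
  have "lie_elem_mat n \<gamma> (0, unit_mat n i j) = unit_mat n i j"
    by (intro eq_matI) (auto simp: lie_elem_mat_def diag_gamma_def unit_mat_def)
  moreover have "A - 0 \<cdot>\<^sub>m diag_gamma n \<gamma> = A" if "A \<in> carrier_mat n n" for A
    using that by (intro eq_matI) (auto simp: diag_gamma_def)
  ultimately show ?thesis using M by (simp add: conj_elem_def)
qed

lemma coadj_lower_index:
  fixes B :: "'a::field mat"
  assumes xi: "xi \<in> dual_space n" and B: "B \<in> carrier_mat n n" and dB: "det B \<noteq> 0"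
    and ij: "i < j" "j < n"
  shows "fst (coadj n \<gamma> B xi) $$ (j,i) = (B * fst xi * mat_inv B) $$ (j,i)"
proof -
  obtain X z where xz: "xi = (X,z)" by (cases xi)
  have X: "X \<in> carrier_mat n n"
    and X0: "\<And>a b. a < n \<Longrightarrow> b < n \<Longrightarrow> a \<le> b \<Longrightarrow> X $$ (a,b) = 0"
    using xi xz unfolding dual_space_def by auto
  note C = mat_inv_left_right(1)[OF B dB]
  have "fst (coadj n \<gamma> B xi) $$ (j,i) =
      (\<Sum>b<n. \<Sum>a<b. X $$ (b,a) * (mat_inv B * unit_mat n i j * B) $$ (a,b))"
    using ij by (simp add: coadj_def pairing_def conj_elem_unit_mat[OF B dB] xz)
  also have "\<dots> = (\<Sum>b<n. \<Sum>a<n. X $$ (b,a) * (mat_inv B $$ (a,i) * B $$ (j,b)))"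
  proof (rule sum.cong[OF refl])
    fix b assume "b \<in> {..<n}"
    thus "(\<Sum>a<b. X $$ (b,a) * (mat_inv B * unit_mat n i j * B) $$ (a,b)) =
          (\<Sum>a<n. X $$ (b,a) * (mat_inv B $$ (a,i) * B $$ (j,b)))"
      using ij X0 by (rule_tac sum.mono_neutral_cong_left)
        (auto simp: mult_unit_mat_mult_index[OF C B])
  qed
  also have "\<dots> = (B * X * mat_inv B) $$ (j,i)"
    using B X C ij by (simp add: scalar_prod_def sum_distrib_left sum_distrib_right
        atLeast0LessThan algebra_simps)
  finally show ?thesis using xz by simp
qed

definition corner_block :: "nat \<Rightarrow> nat \<Rightarrow> 'a mat \<Rightarrow> 'a mat" where
  "corner_block n k X = mat k k (\<lambda>(p,q). X $$ (n - k + p, q))"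

definition diag_block :: "nat \<Rightarrow> nat \<Rightarrow> 'a mat \<Rightarrow> 'a mat" where
  "diag_block s k B = mat k k (\<lambda>(p,q). B $$ (s + p, s + q))"

lemma corner_block_carrier [simp]: "corner_block n k X \<in> carrier_mat k k"
  and corner_block_dim [simp]: "dim_row (corner_block n k X) = k" "dim_col (corner_block n k X) = k"
  by (simp_all add: corner_block_def)

lemma diag_block_carrier [simp]: "diag_block s k B \<in> carrier_mat k k"
  and diag_block_dim [simp]: "dim_row (diag_block s k B) = k" "dim_col (diag_block s k B) = k"
  by (simp_all add: diag_block_def)

lemma corner_minor_eq_det_corner_block: "corner_minor n k xi = det (corner_block n k (fst xi))"
  by (simp add: corner_minor_def corner_block_def)

lemma det_diag_block_nonzero:
  fixes B :: "'a::idom mat"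
  assumes B: "B \<in> carrier_mat n n" and ut: "upper_triangular B" and dB: "det B \<noteq> 0"
    and sk: "s + k \<le> n"
  shows "det (diag_block s k B) \<noteq> 0"
proof -
  have "upper_triangular (diag_block s k B)"
    using ut B sk by (auto simp: diag_block_def upper_triangular_def)
  moreover have "set (diag_mat (diag_block s k B)) \<subseteq> set (diag_mat B)"
    using B sk by (auto simp: diag_mat_def diag_block_def)
  ultimately show ?thesis
    using upper_triangular_imp_det_eq_0_iff[OF B ut] dB
      upper_triangular_imp_det_eq_0_iff[OF diag_block_carrier] by blast
qed

lemma corner_block_conj:
  fixes B C X :: "'a::comm_ring_1 mat"
  assumes B: "B \<in> carrier_mat n n" and C: "C \<in> carrier_mat n n" and X: "X \<in> carrier_mat n n"
    and CB: "C * B = 1\<^sub>m n" and ut: "upper_triangular B" and k: "k \<le> n"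
  shows "corner_block n k (B * X * C) * diag_block 0 k B
       = diag_block (n - k) k B * corner_block n k X"
proof (rule eq_matI)
  have "B * X * C * B = (B * X) * (C * B)"
    by (rule assoc_mult_mat[of "B * X" n n C n B n]) (use B X C in auto)
  hence YB: "B * X * C * B = B * X" using B X CB by simp
  have Bz: "\<And>a b. b < a \<Longrightarrow> a < n \<Longrightarrow> B $$ (a,b) = 0"
    using ut B by auto
  fix p q assume "p < dim_row (diag_block (n - k) k B * corner_block n k X)"
    "q < dim_col (diag_block (n - k) k B * corner_block n k X)"
  hence p: "p < k" and q: "q < k" by auto
  have "(corner_block n k (B * X * C) * diag_block 0 k B) $$ (p,q)
      = (\<Sum>b\<in>{0..<k}. (B * X * C) $$ (n-k+p, b) * B $$ (b,q))"
    using p q by (simp add: corner_block_def diag_block_def scalar_prod_def)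
  also have "\<dots> = (\<Sum>b\<in>{0..<n}. (B * X * C) $$ (n-k+p, b) * B $$ (b,q))"
    by (rule sum.mono_neutral_left) (use k q Bz in auto)
  also have "\<dots> = (B * X * C * B) $$ (n-k+p, q)"
    using p q k B X C by (simp add: scalar_prod_def)
  also have "\<dots> = (B * X) $$ (n-k+p, q)"
    by (simp only: YB)
  also have "\<dots> = (\<Sum>a\<in>{0..<n}. B $$ (n-k+p, a) * X $$ (a, q))"
    using p q k B X by (simp add: scalar_prod_def)
  also have "\<dots> = (\<Sum>a\<in>{n-k..<n}. B $$ (n-k+p, a) * X $$ (a, q))"
    by (rule sum.mono_neutral_right) (use k p Bz in auto)
  also have "\<dots> = (\<Sum>a\<in>{0..<k}. B $$ (n-k+p, n-k+a) * X $$ (n-k+a, q))"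
    using k by (intro sum.reindex_bij_witness[of _ "\<lambda>b. n-k+b" "\<lambda>a. a - (n-k)"]) auto
  also have "\<dots> = (diag_block (n - k) k B * corner_block n k X) $$ (p,q)"
    using p q by (simp add: corner_block_def diag_block_def scalar_prod_def)
  finally show "(corner_block n k (B * X * C) * diag_block 0 k B) $$ (p,q) =
     (diag_block (n - k) k B * corner_block n k X) $$ (p,q)" .
qed auto

lemma corner_block_coadj:
  fixes B :: "'a::field mat"
  assumes xi: "xi \<in> dual_space n" and B: "B \<in> carrier_mat n n" and dB: "det B \<noteq> 0"
    and k: "k \<le> n div 2"
  shows "corner_block n k (fst (coadj n \<gamma> B xi)) = corner_block n k (B * fst xi * mat_inv B)"
proof (rule eq_matI)
  fix p q assume "p < dim_row (corner_block n k (B * fst xi * mat_inv B))"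
    "q < dim_col (corner_block n k (B * fst xi * mat_inv B))"
  hence "p < k" "q < k" by auto
  moreover have "q < n - k + p" "n - k + p < n" using \<open>p < k\<close> \<open>q < k\<close> k by linarith+
  ultimately show "corner_block n k (fst (coadj n \<gamma> B xi)) $$ (p, q) =
      corner_block n k (B * fst xi * mat_inv B) $$ (p, q)"
    by (simp add: corner_block_def coadj_lower_index[OF xi B dB])
qed auto

lemma corner_minor_coadj:
  fixes B :: "'a::field mat"
  assumes xi: "xi \<in> dual_space n" and B: "B \<in> carrier_mat n n" and ut: "upper_triangular B"
    and dB: "det B \<noteq> 0" and k: "k \<le> n div 2"
  shows "corner_minor n k (coadj n \<gamma> B xi)
       = det (diag_block (n - k) k B) / det (diag_block 0 k B) * corner_minor n k xi"
proof -
  have X: "fst xi \<in> carrier_mat n n" using xi by (auto simp: dual_space_def)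
  have "k \<le> n" using k by simp
  note conj = corner_block_conj[OF B mat_inv_left_right(1)[OF B dB] X
      mat_inv_left_right(3)[OF B dB] ut this]
  have "det (corner_block n k (B * fst xi * mat_inv B)) * det (diag_block 0 k B)
      = det (diag_block (n - k) k B) * det (corner_block n k (fst xi))"
    using arg_cong[OF conj, of det] by (simp add: det_mult[of _ k])
  moreover have "det (diag_block 0 k B) \<noteq> 0"
    using det_diag_block_nonzero[OF B ut dB, of 0 k] k by simp
  ultimately show ?thesis
    by (simp add: corner_minor_eq_det_corner_block corner_block_coadj[OF xi B dB k] field_simps)
qed

lemma corner_minor_rel_invariant:
  fixes \<gamma> :: "nat \<Rightarrow> 'a::{real_normed_field,banach}"
  assumes "k \<le> n div 2"
  shows "rel_invariant (T_gamma n \<gamma>) (coadj n \<gamma>) (dual_space n) (corner_minor n k)"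
  unfolding rel_invariant_def
proof (intro exI ballI)
  fix B :: "'a mat" and xi :: "'a mat \<times> 'a"
  assume "B \<in> T_gamma n \<gamma>" and xi: "xi \<in> dual_space n"
  then have "B \<in> carrier_mat n n" "upper_triangular B" "det B \<noteq> 0"
    by (auto simp: T_gamma_def)
  from corner_minor_coadj[OF xi this assms]
  show "corner_minor n k (coadj n \<gamma> B xi) =
      (\<lambda>B xi. det (diag_block (n - k) k B) / det (diag_block 0 k B)) B xi * corner_minor n k xi"
    by simp
qed

lemma corner_block_add_unit_mat:
  fixes X :: "'a::comm_ring_1 mat"
  assumes "X \<in> carrier_mat n n" and "k \<le> n" "n - k \<le> j" "j < n" "i < k"
  shows "corner_block n k (X + t \<cdot>\<^sub>m unit_mat n j i)
       = corner_block n k X + t \<cdot>\<^sub>m unit_mat k (j - (n - k)) i"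
  using assms by (intro eq_matI) (auto simp: corner_block_def unit_mat_def)

lemma corner_block_add_unit_mat_outside:
  fixes X :: "'a::comm_ring_1 mat"
  assumes "X \<in> carrier_mat n n" and "k \<le> n" "j < n" "i < n" and "j < n - k \<or> k \<le> i"
  shows "corner_block n k (X + t \<cdot>\<^sub>m unit_mat n j i) = corner_block n k X"
  using assms by (intro eq_matI) (auto simp: corner_block_def unit_mat_def)

definition corner_minor_partial ::
    "nat \<Rightarrow> nat \<Rightarrow> (nat \<times> nat) option \<Rightarrow> 'a::comm_ring_1 mat \<times> 'a \<Rightarrow> 'a" where
  "corner_minor_partial n k c xi = corner_minor n k (shift_coord n c 1 xi) - corner_minor n k xi"

lemma corner_minor_shift_coord:
  fixes xi :: "'a::comm_ring_1 mat \<times> 'a"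
  assumes xi: "xi \<in> dual_space n" and c: "c \<in> coords n" and k: "k \<le> n"
  shows "corner_minor n k (shift_coord n c t xi)
       = corner_minor n k xi + t * corner_minor_partial n k c xi"
proof -
  have "\<exists>K. \<forall>t. corner_minor n k (shift_coord n c t xi) = corner_minor n k xi + t * K"
  proof (cases c)
    case None
    thus ?thesis by (intro exI[of _ 0]) (simp add: shift_coord_def corner_minor_def)
  next
    case (Some ji)
    then obtain j i where c': "c = Some (j,i)" and ij: "i < j" "j < n"
      using c unfolding coords_def by auto
    have X: "fst xi \<in> carrier_mat n n" using xi by (auto simp: dual_space_def)
    have shift: "fst (shift_coord n c t xi) = fst xi + t \<cdot>\<^sub>m unit_mat n j i" for t
      by (simp add: c' shift_coord_def)
    show ?thesis
    proof (cases "n - k \<le> j \<and> i < k")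
      case True
      hence row: "j - (n - k) < k" using ij by linarith
      show ?thesis
        using True ij k det_add_scaled_unit_mat[OF corner_block_carrier row, of i]
        by (auto simp: shift corner_block_add_unit_mat[OF X] corner_minor_eq_det_corner_block)
    next
      case False
      thus ?thesis using ij k
        by (intro exI[of _ 0])
          (auto simp: shift corner_block_add_unit_mat_outside[OF X] corner_minor_eq_det_corner_block)
    qed
  qed
  then obtain K where "\<And>t. corner_minor n k (shift_coord n c t xi) = corner_minor n k xi + t * K"
    by blast
  thus ?thesis unfolding corner_minor_partial_def by (metis add_diff_cancel_left' mult_1)
qed

lemma corner_minor_shift_coord_derivative:
  fixes xi :: "'a::{real_normed_field,banach} mat \<times> 'a"
  assumes "xi \<in> dual_space n" and "c \<in> coords n" and "k \<le> n"
  shows "((\<lambda>t. corner_minor n k (shift_coord n c t xi)) has_field_derivative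
           corner_minor_partial n k c xi) (at 0)"
  unfolding corner_minor_shift_coord[OF assms]
  by (auto intro!: derivative_eq_intros)

definition antidiag_point :: "nat \<Rightarrow> 'a::zero_neq_one mat \<times> 'a" where
  "antidiag_point n = (mat n n (\<lambda>(j,i). if i + j = n - 1 \<and> i < j then 1 else 0), 0)"

lemma antidiag_point_dual_space: "antidiag_point n \<in> dual_space n"
  by (auto simp: dual_space_def antidiag_point_def)

lemma corner_block_antidiag_point:
  assumes "k \<le> n div 2"
  shows "corner_block n k (fst (antidiag_point n)) = exchange_mat k"
proof (rule eq_matI)
  fix p q assume "p < dim_row (exchange_mat k :: 'a mat)" "q < dim_col (exchange_mat k :: 'a mat)"
  hence "p < k" "q < k" by (auto simp: exchange_mat_def)
  moreover from this assms have "q < n - k + p" "(q + (n - k + p) = n - 1) = (p + q = k - 1)"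
    by linarith+
  ultimately show
    "corner_block n k (fst (antidiag_point n)) $$ (p, q) = (exchange_mat k :: 'a mat) $$ (p, q)"
    using assms by (simp add: corner_block_def antidiag_point_def exchange_mat_def)
qed (auto simp: exchange_mat_def)

lemma corner_minor_partial_antidiag_point_nonzero:
  assumes "1 \<le> k" and "k \<le> n div 2"
  shows "corner_minor_partial n k (Some (n - k, k - 1)) (antidiag_point n) \<noteq> (0 :: 'a::field)"
proof -
  let ?E = "exchange_mat k :: 'a mat"
  have X: "fst (antidiag_point n :: 'a mat \<times> 'a) \<in> carrier_mat n n"
    by (simp add: antidiag_point_def)
  have k0: "0 < k" and kn: "k \<le> n" using assms by auto
  have "corner_minor_partial n k (Some (n - k, k - 1)) (antidiag_point n)
      = det (?E + 1 \<cdot>\<^sub>m unit_mat k 0 (k - 1)) - det ?E"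
    using assms
    by (simp add: corner_minor_partial_def shift_coord_def corner_minor_eq_det_corner_block
        corner_block_add_unit_mat[OF X kn] corner_block_antidiag_point split: prod.splits)
  also have "\<dots> = cofactor ?E 0 (k - 1)"
    using det_add_scaled_unit_mat[OF exchange_mat_carrier[where 'a='a] k0, of "k - 1" 1] k0 by simp
  also have "\<dots> = det ?E"
    using k0 by (intro det_eq_cofactor_if_unit_row[symmetric]) (auto simp: exchange_mat_def)
  finally show ?thesis using det_exchange_mat_nonzero by simp
qed

lemma corner_minor_partial_antidiag_point_zero:
  assumes "k' < k" and "k \<le> n div 2"
  shows "corner_minor_partial n k' (Some (n - k, k - 1)) (antidiag_point n) = (0 :: 'a::field)"
proof -
  have X: "fst (antidiag_point n :: 'a mat \<times> 'a) \<in> carrier_mat n n"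
    by (simp add: antidiag_point_def)
  have "k' \<le> n" "k - 1 < n" "n - k < n - k'" using assms by auto
  then show ?thesis
    using corner_block_add_unit_mat_outside[OF X, of k' "n - k" "k - 1" 1]
    by (simp add: corner_minor_partial_def shift_coord_def corner_minor_eq_det_corner_block
        split: prod.splits)
qed

lemma triangular_combination_eq_zero:
  fixes D :: "nat \<Rightarrow> 'c \<Rightarrow> 'a::idom"
  assumes "finite K"
    and "\<And>k. k \<in> K \<Longrightarrow> c k \<in> C"
    and "\<And>k. k \<in> K \<Longrightarrow> D k (c k) \<noteq> 0"
    and "\<And>k k'. k \<in> K \<Longrightarrow> k' \<in> K \<Longrightarrow> k' < k \<Longrightarrow> D k' (c k) = 0"
    and "\<And>x. x \<in> C \<Longrightarrow> (\<Sum>k\<in>K. a k * D k x) = 0"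
  shows "\<forall>k\<in>K. a k = 0"
  using assms
proof (induction K rule: finite_linorder_max_induct)
  case (insert b A)
  have "D k (c b) = 0" if "k \<in> A" for k
    by (rule insert.prems(3)) (use that insert.hyps(2) in auto)
  hence "(\<Sum>k\<in>A. a k * D k (c b)) = 0" by simp
  moreover have "b \<notin> A" using insert.hyps(2) by blast
  ultimately have "a b * D b (c b) = 0"
    using insert.prems(4)[of "c b"] insert.prems(1) insert.hyps(1) by simp
  hence ab: "a b = 0" using insert.prems(2) by simp
  have "\<forall>k\<in>A. a k = 0"
  proof (rule insert.IH)
    show "(\<Sum>k\<in>A. a k * D k x) = 0" if "x \<in> C" for x
      using insert.prems(4)[OF that] ab \<open>b \<notin> A\<close> insert.hyps(1) by simp
  qed (use insert.prems(1-3) in blast)+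
  with ab show ?case by simp
qed simp

lemma corner_minors_funct_indep:
  "funct_indep n (corner_minor n :: nat \<Rightarrow> 'a::{real_normed_field,banach} mat \<times> 'a \<Rightarrow> 'a) {1..n div 2}"
  unfolding funct_indep_def
proof (intro bexI exI conjI allI impI)
  show "antidiag_point n \<in> dual_space n" by (rule antidiag_point_dual_space)
  show "\<forall>k\<in>{1..n div 2}. \<forall>c\<in>coords n.
      ((\<lambda>t. corner_minor n k (shift_coord n c t (antidiag_point n))) has_field_derivative
        corner_minor_partial n k c (antidiag_point n :: 'a mat \<times> 'a)) (at 0)"
    by (auto intro!: corner_minor_shift_coord_derivative antidiag_point_dual_space)
  fix a assume comb: "\<forall>c\<in>coords n.
    (\<Sum>k\<in>{1..n div 2}. a k * corner_minor_partial n k c (antidiag_point n)) = (0::'a)"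
  show "\<forall>k\<in>{1..n div 2}. a k = 0"
  proof (rule triangular_combination_eq_zero[where c = "\<lambda>k. Some (n - k, k - 1)" and C = "coords n"])
    show "Some (n - k, k - 1) \<in> coords n" if "k \<in> {1..n div 2}" for k
      using that by (auto simp: coords_def)
    show "corner_minor_partial n k (Some (n - k, k - 1)) (antidiag_point n) \<noteq> (0::'a)"
      if "k \<in> {1..n div 2}" for k
      using that by (intro corner_minor_partial_antidiag_point_nonzero) auto
    show "corner_minor_partial n k' (Some (n - k, k - 1)) (antidiag_point n) = (0::'a)"
      if "k \<in> {1..n div 2}" "k' < k" for k k'
      using that by (intro corner_minor_partial_antidiag_point_zero) auto
  qed (use comb in simp_all)
qed

theorem corollary1:
  fixes n :: nat and \<gamma> :: "nat \<Rightarrow> 'a::{real_normed_field,banach}"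
  assumes "n > 1"
    and "\<not> (\<exists>c. \<forall>i<n. \<gamma> i = c)"
  shows "(\<forall>k\<in>{1..n div 2}.
            rel_invariant (T_gamma n \<gamma>) (coadj n \<gamma>) (dual_space n) (corner_minor n k))
       \<and> funct_indep n (corner_minor n) {1..n div 2}"
  using corner_minor_rel_invariant corner_minors_funct_indep by auto

end
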